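(* Let $\sigma\in\mathrm{Av}_n(312)$ and let $i$ be a descent of $\sigma$ (i.e. $\sigma(i)>\sigma(i+1)$). Let $j\in[n]$ be the minimal index such that $\sigma(k)\ge\sigma(i)$ for all $k\in[j,i]$, and let $\tau=\sigma\circ(i\ \ i{+}1)$ be obtained from $\sigma$ by swapping the entries in positions $i$ and $i+1$. Then \[ \pi_\downarrow(\tau)=\sigma\circ\begin{pmatrix} i{+}1 & i & \cdots & j{+}1 & j\end{pmatrix}, \] i.e. $\pi_\downarrow(\tau)$ is obtained from $\sigma$ by moving the entry $\sigma(i+1)$ to position $j$ and shifting the entries in positions $j,\dots,i$ one place to the right.
   Context: $\mathrm{Av}_n(312)$ is the set of permutations $\sigma\in S_n$ with no indices $i_1<i_2<i_3$ such that $\sigma(i_1)>\sigma(i_3)>\sigma(i_2)$. Permutations are written in one-line notation and composed as functions; the cycle $(i{+}1\ i\ \cdots\ j)$ maps $i+1\mapsto i\mapsto\cdots\mapsto j\mapsto i+1$. For $\sigma\in S_n$, an allowable swap is available if there are indices $a,b$ with $a+1<b$ and $\sigma(a+1)<\sigma(b)<\sigma(a)$; it exchanges the entries in positions $a$ and $a+1$. The projection $\pi_\downarrow:S_n\to\mathrm{Av}_n(312)$ sends $\sigma$ to the permutation obtained by repeatedly applying allowable swaps until none is available; this result is known to be independent of the order of swaps. *)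

theory Defs
  imports "HOL-Combinatorics.Combinatorics"
begin

text \<open>Permutations of [n] = {1..n} are functions nat => nat permuting {1..n}
  (identity outside); one-line notation: sigma(1),...,sigma(n).\<close>

definition avoids312 :: "nat \<Rightarrow> (nat \<Rightarrow> nat) \<Rightarrow> bool" where
  "avoids312 n \<sigma> \<longleftrightarrow> \<sigma> permutes {1..n} \<and>
     \<not> (\<exists>i1 i2 i3. 1 \<le> i1 \<and> i1 < i2 \<and> i2 < i3 \<and> i3 \<le> n \<and>
              \<sigma> i1 > \<sigma> i3 \<and> \<sigma> i3 > \<sigma> i2)"

definition allowable_swap :: "nat \<Rightarrow> (nat \<Rightarrow> nat) \<Rightarrow> (nat \<Rightarrow> nat) \<Rightarrow> bool" where
  "allowable_swap n \<sigma> \<tau> \<longleftrightarrow> (\<exists>a b. 1 \<le> a \<and> a + 1 < b \<and> b \<le> n \<and>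
       \<sigma> (a + 1) < \<sigma> b \<and> \<sigma> b < \<sigma> a \<and> \<tau> = \<sigma> \<circ> transpose a (a + 1))"

definition swap_stable :: "nat \<Rightarrow> (nat \<Rightarrow> nat) \<Rightarrow> bool" where
  "swap_stable n \<sigma> \<longleftrightarrow> \<not> (\<exists>\<tau>. allowable_swap n \<sigma> \<tau>)"

text \<open>pi_down: the result of applying allowable swaps until none is available
  (independent of the order of swaps).\<close>
definition pi_down :: "nat \<Rightarrow> (nat \<Rightarrow> nat) \<Rightarrow> (nat \<Rightarrow> nat)" where
  "pi_down n \<sigma> = (THE \<rho>. (allowable_swap n)\<^sup>*\<^sup>* \<sigma> \<rho> \<and> swap_stable n \<rho>)"

end

(* Allowable swaps never change the set of tight inversions: value pairs u < w with w to the left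
   of u and no value strictly between them to the right of u.  In a swap-stable permutation every
   inversion is tight, and a permutation of [n] is determined by its inversions, so pi_down(tau) is
   the unique swap-stable permutation reachable from tau.  From tau, the entry sigma(i+1) can be
   swapped leftwards past sigma(i-1), ..., sigma(j), all larger than sigma(i), each time with the
   entry sigma(i), now at position i+1, as the witness b.  By the choice of j the result still
   avoids 312, so it is swap-stable. *)

theory Submission
  imports Defs
begin

definition pattern312 :: "nat \<Rightarrow> (nat \<Rightarrow> nat) \<Rightarrow> nat \<Rightarrow> nat \<Rightarrow> nat \<Rightarrow> bool" where
  "pattern312 n \<sigma> a b c \<longleftrightarrow> 1 \<le> a \<and> a < b \<and> b < c \<and> c \<le> n \<and> \<sigma> b < \<sigma> c \<and> \<sigma> c < \<sigma> a"

lemma avoids312_iff: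
  "avoids312 n \<sigma> \<longleftrightarrow> \<sigma> permutes {1..n} \<and> (\<forall>a b c. \<not> pattern312 n \<sigma> a b c)"
  unfolding avoids312_def pattern312_def by blast

lemma avoids312_imp_swap_stable:
  assumes "avoids312 n \<sigma>"
  shows "swap_stable n \<sigma>"
proof -
  have "\<not> allowable_swap n \<sigma> \<tau>" for \<tau>
  proof
    assume "allowable_swap n \<sigma> \<tau>"
    then obtain a b where "1 \<le> a" "a + 1 < b" "b \<le> n" "\<sigma> (a + 1) < \<sigma> b" "\<sigma> b < \<sigma> a"
      unfolding allowable_swap_def by blast
    then have "pattern312 n \<sigma> a (a + 1) b"
      unfolding pattern312_def by simp
    with assms show False
      unfolding avoids312_iff by blast
  qed
  then show ?thesis
    unfolding swap_stable_def by blast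
qed

definition inversions :: "nat \<Rightarrow> (nat \<Rightarrow> nat) \<Rightarrow> (nat \<times> nat) set" where
  "inversions n \<sigma> = {(\<sigma> q, \<sigma> p) | p q. 1 \<le> p \<and> p < q \<and> q \<le> n \<and> \<sigma> q < \<sigma> p}"

(* Inversions are recorded as pairs of values, not of positions: only then are the tight ones
   invariant under allowable swaps. *)
definition tight_inversions :: "nat \<Rightarrow> (nat \<Rightarrow> nat) \<Rightarrow> (nat \<times> nat) set" where
  "tight_inversions n \<sigma> = {(\<sigma> q, \<sigma> p) | p q. 1 \<le> p \<and> p < q \<and> q \<le> n \<and> \<sigma> q < \<sigma> p \<and>
     (\<forall>r. q < r \<and> r \<le> n \<longrightarrow> \<not> (\<sigma> q < \<sigma> r \<and> \<sigma> r < \<sigma> p))}"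

(* Symmetric in the two swapped entries, so that it also applies to the inverse swap. *)
lemma tight_inversions_subset_swap:
  assumes "1 \<le> a" "a + 1 < b" "b \<le> n"
    and "min (\<sigma> a) (\<sigma> (a + 1)) < \<sigma> b" "\<sigma> b < max (\<sigma> a) (\<sigma> (a + 1))"
  shows "tight_inversions n \<sigma> \<subseteq> tight_inversions n (\<sigma> \<circ> transpose a (a + 1))"
proof
  fix x assume "x \<in> tight_inversions n \<sigma>"
  then obtain p q where x: "x = (\<sigma> q, \<sigma> p)" and pq: "1 \<le> p" "p < q" "q \<le> n" "\<sigma> q < \<sigma> p"
    and tight: "\<And>r. q < r \<Longrightarrow> r \<le> n \<Longrightarrow> \<not> (\<sigma> q < \<sigma> r \<and> \<sigma> r < \<sigma> p)"
    unfolding tight_inversions_def by blast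
  define t where "t = transpose a (a + 1)"
  have t_t [simp]: "t (t z) = z" for z
    unfolding t_def by simp
  have not_swapped: "\<not> (p = a \<and> q = a + 1)"
    using tight[of b] assms pq by auto
  then have "t p < t q" "1 \<le> t p" "t q \<le> n"
    using pq assms unfolding t_def transpose_def by auto
  moreover have "\<not> ((\<sigma> \<circ> t) (t q) < (\<sigma> \<circ> t) r \<and> (\<sigma> \<circ> t) r < (\<sigma> \<circ> t) (t p))"
    if r: "t q < r" "r \<le> n" for r
  proof (cases "t q = a \<and> r = a + 1")
    case True
    then have "q = a + 1" "t r = a"
      unfolding t_def by (auto simp: transpose_def split: if_splits)
    then show ?thesis
      using tight[of b] assms pq by auto
  next
    case False
    then have "q < t r" "t r \<le> n"
      using r assms unfolding t_def transpose_def by (auto split: if_splits)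
    then show ?thesis
      using tight by simp
  qed
  ultimately show "x \<in> tight_inversions n (\<sigma> \<circ> transpose a (a + 1))"
    unfolding tight_inversions_def x t_def[symmetric]
    using pq(4) by (intro CollectI exI[of _ "t p"] exI[of _ "t q"]) simp
qed

lemma allowable_swap_tight_inversions:
  assumes "allowable_swap n \<sigma> \<tau>"
  shows "tight_inversions n \<tau> = tight_inversions n \<sigma>"
proof -
  obtain a b where ab: "1 \<le> a" "a + 1 < b" "b \<le> n" "\<sigma> (a + 1) < \<sigma> b" "\<sigma> b < \<sigma> a"
    and \<tau>: "\<tau> = \<sigma> \<circ> transpose a (a + 1)"
    using assms unfolding allowable_swap_def by blast
  have \<sigma>: "\<sigma> = \<tau> \<circ> transpose a (a + 1)"
    using \<tau> by (simp add: fun_eq_iff)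
  have "\<tau> a = \<sigma> (a + 1)" "\<tau> (a + 1) = \<sigma> a" "\<tau> b = \<sigma> b"
    using \<tau> ab by auto
  then have "tight_inversions n \<tau> \<subseteq> tight_inversions n \<sigma>"
    using tight_inversions_subset_swap[of a b n \<tau>, folded \<sigma>] ab by simp
  moreover have "tight_inversions n \<sigma> \<subseteq> tight_inversions n \<tau>"
    using tight_inversions_subset_swap[of a b n \<sigma>] ab by (simp add: \<tau>)
  ultimately show ?thesis
    by (rule subset_antisym)
qed

lemma allowable_swap_permutes:
  assumes "allowable_swap n \<sigma> \<tau>" "\<sigma> permutes {1..n}"
  shows "\<tau> permutes {1..n}"
proof -
  obtain a b where "1 \<le> a" "a + 1 < b" "b \<le> n" "\<tau> = \<sigma> \<circ> transpose a (a + 1)"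
    using assms(1) unfolding allowable_swap_def by blast
  then show ?thesis
    by (metis permutes_compose[OF permutes_swap_id assms(2)] atLeastAtMost_iff
        add_lessD1 less_imp_le le_add2 order.trans)
qed

lemma rtranclp_allowable_swap_tight_inversions:
  "(allowable_swap n)\<^sup>*\<^sup>* \<sigma> \<tau> \<Longrightarrow> tight_inversions n \<tau> = tight_inversions n \<sigma>"
  by (induction rule: rtranclp_induct) (simp_all add: allowable_swap_tight_inversions)

lemma rtranclp_allowable_swap_permutes:
  "(allowable_swap n)\<^sup>*\<^sup>* \<sigma> \<tau> \<Longrightarrow> \<sigma> permutes {1..n} \<Longrightarrow> \<tau> permutes {1..n}"
  by (induction rule: rtranclp_induct) (blast intro: allowable_swap_permutes)+

lemma ex_down_crossing:
  fixes f :: "nat \<Rightarrow> 'a::linorder"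
  assumes "p < q" "f q < x" "x \<le> f p"
  shows "\<exists>m. p \<le> m \<and> m < q \<and> f (Suc m) < x \<and> x \<le> f m"
  using assms
proof (induction q)
  case (Suc q)
  show ?case
  proof (cases "p < q \<and> f q < x")
    case True
    then obtain m where "p \<le> m" "m < q" "f (Suc m) < x" "x \<le> f m"
      using Suc.IH Suc.prems by blast
    then show ?thesis
      by (intro exI[of _ m]) auto
  next
    case False
    then show ?thesis
      using Suc.prems by (intro exI[of _ q]) (auto simp: less_Suc_eq not_less)
  qed
qed simp

lemma swap_stable_tight_inversions:
  assumes "swap_stable n \<rho>" "inj \<rho>"
  shows "tight_inversions n \<rho> = inversions n \<rho>"
proof -
  have "\<not> (\<rho> q < \<rho> r \<and> \<rho> r < \<rho> p)" if pqr: "1 \<le> p" "p < q" "q < r" "r \<le> n" for p q r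
  proof
    assume between: "\<rho> q < \<rho> r \<and> \<rho> r < \<rho> p"
    then obtain m where m: "p \<le> m" "m < q" "\<rho> (m + 1) < \<rho> r" "\<rho> r \<le> \<rho> m"
      using ex_down_crossing[of p q \<rho> "\<rho> r"] pqr by auto
    moreover have "\<rho> r \<noteq> \<rho> m"
      using \<open>inj \<rho>\<close> m pqr by (metis inj_eq less_asym)
    ultimately have "allowable_swap n \<rho> (\<rho> \<circ> transpose m (m + 1))"
      unfolding allowable_swap_def using pqr by (intro exI[of _ m] exI[of _ r]) auto
    then show False
      using assms(1) unfolding swap_stable_def by blast
  qed
  then have "inversions n \<rho> \<subseteq> tight_inversions n \<rho>"
    unfolding tight_inversions_def inversions_def by blast
  moreover have "tight_inversions n \<rho> \<subseteq> inversions n \<rho>"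
    unfolding tight_inversions_def inversions_def by blast
  ultimately show ?thesis
    by (rule subset_antisym[symmetric])
qed

lemma inversions_first_difference:
  assumes "\<rho> permutes {1..n}" "\<rho>' permutes {1..n}" "inversions n \<rho>' \<subseteq> inversions n \<rho>"
    and "\<forall>m<k. \<rho> m = \<rho>' m" "k \<in> {1..n}"
  shows "\<not> \<rho> k < \<rho>' k"
proof
  assume less: "\<rho> k < \<rho>' k"
  have inj: "inj \<rho>" "inj \<rho>'"
    using assms(1,2) by (simp_all add: permutes_inj)
  obtain m where m: "m \<in> {1..n}" "\<rho>' m = \<rho> k"
    using assms(1,2,5) by (metis imageE permutes_image permutes_in_image)
  have "\<not> m < k"
    using inj m less assms(4) by (metis inj_eq less_irrefl)
  moreover have "m \<noteq> k"
    using m less by auto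
  ultimately have "(\<rho> k, \<rho>' k) \<in> inversions n \<rho>'"
    unfolding inversions_def using m less assms(5)
    by (intro CollectI exI[of _ k] exI[of _ m]) auto
  then obtain p q where pq: "\<rho> k = \<rho> q" "\<rho>' k = \<rho> p" "1 \<le> p" "p < q"
    using assms(3) unfolding inversions_def by blast
  then have "p < k"
    using inj by (simp add: inj_eq)
  then show False
    using pq inj assms(4) by (metis inj_eq less_irrefl)
qed

lemma permutes_inversions_inject:
  assumes "\<rho> permutes {1..n}" "\<rho>' permutes {1..n}" "inversions n \<rho> = inversions n \<rho>'"
  shows "\<rho> = \<rho>'"
proof (rule ccontr)
  assume "\<rho> \<noteq> \<rho>'"
  then have ex: "\<exists>k. \<rho> k \<noteq> \<rho>' k"
    by (auto simp: fun_eq_iff)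
  define k where "k = (LEAST k. \<rho> k \<noteq> \<rho>' k)"
  have k: "\<rho> k \<noteq> \<rho>' k" "\<forall>m<k. \<rho> m = \<rho>' m"
    using LeastI_ex[OF ex] not_less_Least unfolding k_def by blast+
  then have "k \<in> {1..n}"
    using assms(1,2) by (metis permutes_not_in)
  then show False
    using k inversions_first_difference[OF assms(1,2)] inversions_first_difference[OF assms(2,1)]
      assms(3) by (metis linorder_neq_iff order_refl)
qed

lemma pi_down_eqI:
  assumes "\<sigma> permutes {1..n}" "(allowable_swap n)\<^sup>*\<^sup>* \<sigma> \<rho>" "swap_stable n \<rho>"
  shows "pi_down n \<sigma> = \<rho>"
  unfolding pi_down_def
proof (rule the_equality)
  show "(allowable_swap n)\<^sup>*\<^sup>* \<sigma> \<rho> \<and> swap_stable n \<rho>"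
    using assms(2,3) ..
next
  fix \<rho>' assume \<rho>': "(allowable_swap n)\<^sup>*\<^sup>* \<sigma> \<rho>' \<and> swap_stable n \<rho>'"
  have perm: "\<rho> permutes {1..n}" "\<rho>' permutes {1..n}"
    using assms \<rho>' rtranclp_allowable_swap_permutes by blast+
  have "inversions n \<rho>' = tight_inversions n \<rho>'"
    using \<rho>' perm by (simp add: swap_stable_tight_inversions permutes_inj)
  also have "\<dots> = tight_inversions n \<rho>"
    using \<rho>' assms(2) by (simp add: rtranclp_allowable_swap_tight_inversions)
  also have "\<dots> = inversions n \<rho>"
    using assms(3) perm by (simp add: swap_stable_tight_inversions permutes_inj)
  finally show "\<rho>' = \<rho>"
    using perm by (simp add: permutes_inversions_inject)
qed

definition move_left :: "(nat \<Rightarrow> nat) \<Rightarrow> nat \<Rightarrow> nat \<Rightarrow> nat \<Rightarrow> nat" where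
  "move_left \<sigma> a m = \<sigma> \<circ> cycle_of_list (rev [m..<Suc a])"

lemma cycle_of_list_rev_upt:
  assumes "m \<le> a"
  shows "cycle_of_list (rev [m..<Suc a]) x = (if x = m then a else if m < x \<and> x \<le> a then x - 1 else x)"
  using assms
proof (induction a rule: dec_induct)
  case (step a)
  have "rev [m..<Suc (Suc a)] = Suc a # rev [m..<Suc a]" "rev [m..<Suc a] = a # rev [m..<a]"
    using step.hyps by simp_all
  then have "cycle_of_list (rev [m..<Suc (Suc a)]) = transpose (Suc a) a \<circ> cycle_of_list (rev [m..<Suc a])"
    by simp
  then show ?case
    using step by (auto simp: transpose_def)
qed simp

lemma move_left_apply:
  "m \<le> a \<Longrightarrow> move_left \<sigma> a m p = (if p = m then \<sigma> a else if m < p \<and> p \<le> a then \<sigma> (p - 1) else \<sigma> p)"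
  using cycle_of_list_rev_upt[of m a p] by (simp add: move_left_def)

lemma move_left_adjacent: "move_left \<sigma> (Suc i) i = \<sigma> \<circ> transpose i (Suc i)"
  by (simp add: move_left_def transpose_commute)

lemma move_left_permutes:
  assumes "\<sigma> permutes {1..n}" "1 \<le> m" "a \<le> n"
  shows "move_left \<sigma> a m permutes {1..n}"
proof -
  have "cycle_of_list (rev [m..<Suc a]) permutes {1..n}"
    using cycle_permutes by (rule permutes_subset) (use assms in auto)
  then show ?thesis
    unfolding move_left_def using assms(1) by (rule permutes_compose)
qed

lemma allowable_swap_move_left:
  assumes "1 < m" "m < a" "a \<le> n" "\<sigma> a < \<sigma> (a - 1)" "\<sigma> (a - 1) < \<sigma> (m - 1)"
  shows "allowable_swap n (move_left \<sigma> a m) (move_left \<sigma> a (m - 1))"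
proof -
  have "move_left \<sigma> a (m - 1) = move_left \<sigma> a m \<circ> transpose (m - 1) (m - 1 + 1)"
    using assms(1,2) by (auto simp: fun_eq_iff move_left_apply transpose_def)
  then show ?thesis
    unfolding allowable_swap_def using assms
    by (intro exI[of _ "m - 1"] exI[of _ a]) (auto simp: move_left_apply)
qed

lemma rtranclp_allowable_swap_move_left:
  assumes "1 \<le> j" "j \<le> m" "m < a" "a \<le> n" "\<sigma> a < \<sigma> (a - 1)" "\<forall>k\<in>{j..<m}. \<sigma> (a - 1) < \<sigma> k"
  shows "(allowable_swap n)\<^sup>*\<^sup>* (move_left \<sigma> a m) (move_left \<sigma> a j)"
  using assms(2,3,6)
proof (induction m rule: dec_induct)
  case (step k)
  have "allowable_swap n (move_left \<sigma> a (Suc k)) (move_left \<sigma> a k)"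
    using allowable_swap_move_left[of "Suc k" a n \<sigma>] step assms(1,4,5) by simp
  moreover have "(allowable_swap n)\<^sup>*\<^sup>* (move_left \<sigma> a k) (move_left \<sigma> a j)"
    using step by simp
  ultimately show ?case
    by (rule converse_rtranclp_into_rtranclp)
qed simp

lemma pattern312_move_left_lift:
  assumes "pattern312 n (move_left \<sigma> a m) x y z" "m \<notin> {x, y, z}" "1 \<le> m" "m \<le> a"
  shows "\<exists>x' y' z'. pattern312 n \<sigma> x' y' z'"
proof -
  define g where "g p = (if m < p \<and> p \<le> a then p - 1 else p)" for p
  have \<mu>: "move_left \<sigma> a m p = \<sigma> (g p)" if "p \<noteq> m" for p
    using that assms(4) by (simp add: move_left_apply g_def)
  have g_mono: "g p < g q" if "p < q" "p \<noteq> m" "q \<noteq> m" for p q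
    using that by (auto simp: g_def)
  have "1 \<le> g x" "g z \<le> z"
    using assms unfolding pattern312_def g_def by auto
  then have "pattern312 n \<sigma> (g x) (g y) (g z)"
    using assms(1,2) unfolding pattern312_def by (auto simp: \<mu> g_mono)
  then show ?thesis
    by blast
qed

lemma avoids312_move_left:
  assumes "avoids312 n \<sigma>" "1 \<le> j" "j \<le> i" "i < n" "\<sigma> (i + 1) < \<sigma> i"
    and "\<forall>k\<in>{j..i}. \<sigma> i \<le> \<sigma> k" "j = 1 \<or> \<sigma> (j - 1) < \<sigma> i"
  shows "avoids312 n (move_left \<sigma> (i + 1) j)"
proof -
  let ?\<mu> = "move_left \<sigma> (i + 1) j"
  have no312: "\<not> pattern312 n \<sigma> x y z" for x y z
    using assms(1) unfolding avoids312_iff by blast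
  have \<mu>_moved: "?\<mu> j = \<sigma> (i + 1)"
    using assms(3) by (simp add: move_left_apply)
  have \<mu>_shifted: "\<sigma> i \<le> ?\<mu> p" if "j < p" "p \<le> i + 1" for p
  proof -
    have "p - 1 \<in> {j..i}"
      using that by auto
    then show ?thesis
      using that assms(3,6) by (simp add: move_left_apply)
  qed
  have \<mu>_fixed: "?\<mu> p = \<sigma> p" if "p < j \<or> i + 1 < p" for p
    using that assms(3) by (auto simp: move_left_apply)
  have "\<not> pattern312 n ?\<mu> x y z" for x y z
  proof
    assume pat: "pattern312 n ?\<mu> x y z"
    consider "x = j" | "y = j" | "z = j" | "j \<notin> {x, y, z}"
      by blast
    then show False
    proof cases
      case 1
      then have "i + 1 < y"
        using pat \<mu>_moved \<mu>_shifted[of y] assms(5) unfolding pattern312_def by fastforce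
      then have "pattern312 n \<sigma> (i + 1) y z"
        using pat 1 \<mu>_moved \<mu>_fixed unfolding pattern312_def by auto
      with no312 show False ..
    next
      case 2
      then have x: "?\<mu> x = \<sigma> x" "1 \<le> x" "x < j"
        using pat \<mu>_fixed unfolding pattern312_def by auto
      show False
      proof (cases "i + 1 < z")
        case True
        then have "pattern312 n \<sigma> x (i + 1) z"
          using pat 2 x \<mu>_moved \<mu>_fixed assms(3) unfolding pattern312_def by auto
        with no312 show False ..
      next
        case False
        then have above: "\<sigma> i < \<sigma> x"
          using pat 2 x \<mu>_shifted[of z] unfolding pattern312_def by auto
        moreover have below: "\<sigma> (j - 1) < \<sigma> i" \<comment> \<open>minimality of \<open>j\<close>\<close>
          using assms(7) x by auto
        ultimately have "x < j - 1"
          using x by (cases "x = j - 1") auto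
        then have "pattern312 n \<sigma> x (j - 1) i"
          using x above below assms(3,4) unfolding pattern312_def by auto
        with no312 show False ..
      qed
    next
      case 3
      then have "pattern312 n \<sigma> x y (i + 1)"
        using pat \<mu>_moved \<mu>_fixed assms(3,4) unfolding pattern312_def by auto
      with no312 show False ..
    next
      case 4
      then show False
        using pattern312_move_left_lift[OF pat] no312 assms(2,3) by auto
    qed
  qed
  moreover have "?\<mu> permutes {1..n}"
    using assms(1,2,4) unfolding avoids312_iff by (intro move_left_permutes) auto
  ultimately show ?thesis
    unfolding avoids312_iff by blast
qed

lemma least_run_start:
  fixes f :: "nat \<Rightarrow> 'a::linorder"
  assumes "1 \<le> i"
  defines "j \<equiv> LEAST j. 1 \<le> j \<and> (\<forall>k\<in>{j..i}. f i \<le> f k)"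
  shows "1 \<le> j" "j \<le> i" "\<forall>k\<in>{j..i}. f i \<le> f k" "j = 1 \<or> f (j - 1) < f i"
proof -
  let ?P = "\<lambda>j. 1 \<le> j \<and> (\<forall>k\<in>{j..i}. f i \<le> f k)"
  have "?P i"
    using assms(1) by simp
  then have Pj: "?P j"
    unfolding j_def by (rule LeastI)
  then show "1 \<le> j" "\<forall>k\<in>{j..i}. f i \<le> f k"
    by simp_all
  show "j \<le> i"
    unfolding j_def using \<open>?P i\<close> by (rule Least_le)
  show "j = 1 \<or> f (j - 1) < f i"
  proof (cases "j = 1")
    case False
    then have "j - 1 < j"
      using Pj by simp
    then have "\<not> ?P (j - 1)"
      unfolding j_def by (rule not_less_Least)
    then obtain k where "k \<in> {j - 1..i}" "f k < f i"
      using Pj False by (auto simp: not_le)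
    moreover have "k \<notin> {j..i}"
      using Pj calculation(2) leD by blast
    ultimately have "k = j - 1"
      by auto
    with \<open>f k < f i\<close> show ?thesis
      by simp
  qed simp
qed

theorem proposition4p2:
  fixes n i :: nat and \<sigma> :: "nat \<Rightarrow> nat"
  assumes "avoids312 n \<sigma>"
    and "1 \<le> i" and "i < n" and "\<sigma> i > \<sigma> (i + 1)"
  shows "pi_down n (\<sigma> \<circ> transpose i (i + 1))
           = \<sigma> \<circ> cycle_of_list (rev [(LEAST j. 1 \<le> j \<and> (\<forall>k\<in>{j..i}. \<sigma> k \<ge> \<sigma> i))..<i + 2])"
proof -
  define j where "j = (LEAST j. 1 \<le> j \<and> (\<forall>k\<in>{j..i}. \<sigma> k \<ge> \<sigma> i))"
  have j: "1 \<le> j" "j \<le> i" "\<forall>k\<in>{j..i}. \<sigma> i \<le> \<sigma> k" "j = 1 \<or> \<sigma> (j - 1) < \<sigma> i"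
    using least_run_start[OF assms(2), of \<sigma>, folded j_def] by auto
  have perm: "\<sigma> permutes {1..n}"
    using assms(1) unfolding avoids312_iff by blast
  have "\<sigma> i < \<sigma> k" if "k \<in> {j..<i}" for k
    using that j(3) inj_eq[OF permutes_inj[OF perm]] by (force simp: le_less)
  then have "(allowable_swap n)\<^sup>*\<^sup>* (move_left \<sigma> (i + 1) i) (move_left \<sigma> (i + 1) j)"
    using j assms(3,4) by (intro rtranclp_allowable_swap_move_left) auto
  moreover have "swap_stable n (move_left \<sigma> (i + 1) j)"
    using avoids312_move_left[OF assms(1) j(1,2) assms(3,4) j(3,4)] by (rule avoids312_imp_swap_stable)
  moreover have "move_left \<sigma> (i + 1) i permutes {1..n}"
    using move_left_permutes[OF perm] assms(2,3) by simp
  ultimately have "pi_down n (move_left \<sigma> (i + 1) i) = move_left \<sigma> (i + 1) j"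
    by (intro pi_down_eqI)
  moreover have "move_left \<sigma> (i + 1) i = \<sigma> \<circ> transpose i (i + 1)"
    by (simp add: move_left_adjacent)
  moreover have "move_left \<sigma> (i + 1) j = \<sigma> \<circ> cycle_of_list (rev [j..<i + 2])"
    by (simp only: move_left_def Suc_eq_plus1 add.assoc one_add_one)
  ultimately show ?thesis
    unfolding j_def by argo
qed

end
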